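(* Let $\pi>0$, $\bar d>0$, $0<\theta_1<\dots<\theta_K$, $0\le\beta_1<\dots<\beta_M\le1$, and $A:[0,D]\to[0,\bar d]$. For $(Q,\Pi)\in[0,D]\times\mathbb{R}$ and a type $(\beta,\theta)$ let $\bar S(Q,\Pi,\beta,\theta)=\theta[\bar d-\beta A(Q)]-\pi(1-\beta)A(Q)-\Pi$. Then the smallest-payoff user type $\Lambda_\epsilon(Q,\Pi)\in\arg\min_{(\beta_m,\theta_k)}\bar S(Q,\Pi,\beta_m,\theta_k)$ does not depend on $(Q,\Pi)$: there is a single type among the $KM$ types $(\beta_m,\theta_k)$ that minimizes $\bar S(Q,\Pi,\cdot)$ for every $(Q,\Pi)\in[0,D]\times\mathbb{R}$.
   Context: Model: $\pi$ is the overage price, $\bar d$ the mean monthly data demand, $A(Q)$ the expected overage data consumption under data cap $Q$; $\bar S$ is the expected payoff of a type-$(\beta,\theta)$ user (data valuation $\theta$, network substitutability $\beta$) under a plan with cap $Q$ and subscription fee $\Pi$. *)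

theory Defs
  imports Complex_Main
begin

definition Sbar :: "real \<Rightarrow> real \<Rightarrow> (real \<Rightarrow> real) \<Rightarrow> real \<Rightarrow> real \<Rightarrow> real \<Rightarrow> real \<Rightarrow> real" where
  "Sbar p dbar A Q Pi beta theta = theta * (dbar - beta * A Q) - p * (1 - beta) * A Q - Pi"

end

theory Submission
  imports Defs
begin

text \<open>For a fixed valuation the payoff is affine in \<open>\<beta>\<close> with slope \<open>-(\<theta> - \<pi>) A(Q)\<close>;
  since \<open>A(Q) \<ge> 0\<close>, the sign of the slope, and hence which end of the \<open>\<beta>\<close>-range is
  worst, does not depend on \<open>Q\<close> or \<open>\<Pi>\<close>. The payoff also increases in \<open>\<theta>\<close>,
  because \<open>\<beta> A(Q) \<le> d\<close>. So the lowest valuation \<open>\<theta>\<^sub>1\<close>, paired with \<open>\<beta>\<^sub>M\<close> if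
  \<open>\<theta>\<^sub>1 \<ge> \<pi>\<close> and with \<open>\<beta>\<^sub>1\<close> otherwise, is always a minimizer.\<close>

lemma Sbar_mono_theta:
  assumes "0 \<le> beta" "beta \<le> 1" "0 \<le> A Q" "A Q \<le> dbar" "theta \<le> theta'"
  shows "Sbar p dbar A Q Pi beta theta \<le> Sbar p dbar A Q Pi beta theta'"
proof -
  have "beta * A Q \<le> dbar"
    using assms by (metis mult_left_le_one_le order_trans)
  then show ?thesis
    using assms(5) unfolding Sbar_def by (smt (verit) mult_right_mono)
qed

lemma Sbar_diff_beta:
  "Sbar p dbar A Q Pi beta' theta - Sbar p dbar A Q Pi beta theta
     = A Q * ((theta - p) * (beta - beta'))"
  unfolding Sbar_def by (simp add: algebra_simps)

lemma strict_mono_on_atLeastAtMost_le: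
  fixes f :: "nat \<Rightarrow> 'a::order"
  assumes "strict_mono_on {a..b} f" "i \<in> {a..b}" "j \<in> {a..b}" "i \<le> j"
  shows "f i \<le> f j"
  using assms by (metis order.order_iff_strict strict_mono_onD)

theorem lemma2:
  fixes p dbar D :: real and K M :: nat
    and theta beta :: "nat \<Rightarrow> real" and A :: "real \<Rightarrow> real"
  assumes "p > 0" and "dbar > 0"
    and "K \<ge> 1" and "M \<ge> 1"
    and "theta 1 > 0" and "strict_mono_on {1..K} theta"
    and "beta 1 \<ge> 0" and "beta M \<le> 1" and "strict_mono_on {1..M} beta"
    and "\<forall>Q\<in>{0..D}. A Q \<in> {0..dbar}"
  shows "\<exists>m\<in>{1..M}. \<exists>k\<in>{1..K}. \<forall>Q\<in>{0..D}. \<forall>Pi::real.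
           \<forall>m'\<in>{1..M}. \<forall>k'\<in>{1..K}.
             Sbar p dbar A Q Pi (beta m) (theta k) \<le> Sbar p dbar A Q Pi (beta m') (theta k')"
proof -
  define m where "m = (if theta 1 \<ge> p then M else 1)"
  note beta_le = strict_mono_on_atLeastAtMost_le[OF assms(9)]
  show ?thesis
  proof (intro bexI ballI allI)
    fix Q Pi m' k' assume Q: "Q \<in> {0..D}" and m': "m' \<in> {1..M}" and k': "k' \<in> {1..K}"
    have A_range: "0 \<le> A Q" "A Q \<le> dbar" using assms(10) Q by auto
    have "0 \<le> beta m'" "beta m' \<le> 1"
      using beta_le[of 1 m'] beta_le[of m' M] m' assms(4,7,8) by auto
    moreover have "theta 1 \<le> theta k'"
      using strict_mono_on_atLeastAtMost_le[OF assms(6), of 1 k'] k' by auto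
    ultimately have theta_step:
      "Sbar p dbar A Q Pi (beta m') (theta 1) \<le> Sbar p dbar A Q Pi (beta m') (theta k')"
      using A_range by (simp add: Sbar_mono_theta)
    have "(theta 1 - p) * (beta m - beta m') \<ge> 0"
      using beta_le[of m' M] beta_le[of 1 m'] m' assms(4)
      by (cases "theta 1 \<ge> p") (auto simp: m_def mult_nonpos_nonpos)
    then have "Sbar p dbar A Q Pi (beta m) (theta 1) \<le> Sbar p dbar A Q Pi (beta m') (theta 1)"
      using Sbar_diff_beta[of p dbar A Q Pi "beta m'" "theta 1" "beta m"] A_range(1)
      by (smt (verit) mult_nonneg_nonneg)
    with theta_step show "Sbar p dbar A Q Pi (beta m) (theta 1) \<le> Sbar p dbar A Q Pi (beta m') (theta k')"
      by linarith
  qed (use assms(3,4) m_def in auto)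
qed

end
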